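(* Let $k$ be a field of characteristic zero. The variety $S_I\subset\mathrm{SL}(2)\times_k\mathrm{SL}(2)$ of commuting pairs, defined by $XYX^{-1}Y^{-1}=I$, is $k$-rational of dimension $4$. *)

theory Defs
  imports "HOL-Analysis.Analysis" "HOL-Library.Poly_Mapping"
          "HOL-Algebra.Algebraic_Closure_Type"
begin

text \<open>Multivariate polynomials in the variables x_0, x_1, ... with coefficients in 'a,
  represented as finitely supported maps from monomials (exponent vectors) to coefficients.\<close>
type_synonym 'a mpoly = "(nat \<Rightarrow>\<^sub>0 nat) \<Rightarrow>\<^sub>0 'a"

definition mpoly_vars :: "'a::zero mpoly \<Rightarrow> nat set" where
  "mpoly_vars p = \<Union> (Poly_Mapping.keys ` Poly_Mapping.keys p)"

definition poly_in :: "nat \<Rightarrow> 'a::zero mpoly \<Rightarrow> bool" where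
  "poly_in n p \<longleftrightarrow> mpoly_vars p \<subseteq> {..<n}"

definition meval :: "('a::zero \<Rightarrow> 'b::comm_ring_1) \<Rightarrow> 'a mpoly \<Rightarrow> 'b list \<Rightarrow> 'b" where
  "meval e p x = (\<Sum>m\<in>Poly_Mapping.keys p. e (Poly_Mapping.lookup p m) * (\<Prod>i\<in>Poly_Mapping.keys (m :: nat \<Rightarrow>\<^sub>0 nat). (x ! i) ^ Poly_Mapping.lookup m i))"

definition zariski_dense_in :: "nat \<Rightarrow> 'b::field list set \<Rightarrow> 'b list set \<Rightarrow> bool" where
  "zariski_dense_in n U V \<longleftrightarrow> U \<subseteq> V \<and>
     (\<forall>p :: 'b mpoly. poly_in n p \<longrightarrow> (\<forall>x\<in>U. meval id p x = 0) \<longrightarrow> (\<forall>x\<in>V. meval id p x = 0))"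

text \<open>V is the set of geometric points (over the algebraic closure of k) of an affine
  k-variety in affine n-space.  V is k-rational of dimension d: V is birational to affine
  d-space via rational maps defined over k.  phi : A^d --> V is given by (f_i / g),
  psi : V --> A^d by (p_j / q); both have coefficients in k; psi is defined on a dense
  open subset U of V with phi o psi = id there, and psi o phi = id on a nonempty
  (hence dense) open subset W' of A^d.\<close>
definition k_rational_of_dim :: "nat \<Rightarrow> nat \<Rightarrow> 'k::field alg_closure list set \<Rightarrow> bool" where
  "k_rational_of_dim d n V \<longleftrightarrow> V \<subseteq> {x. length x = n} \<and>
    (\<exists>(f :: nat \<Rightarrow> 'k mpoly) (g :: 'k mpoly) (p :: nat \<Rightarrow> 'k mpoly) (q :: 'k mpoly).
      (\<forall>i<n. poly_in d (f i)) \<and> poly_in d g \<and> (\<forall>j<d. poly_in n (p j)) \<and> poly_in n q \<and>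
      (let \<phi> = (\<lambda>t. map (\<lambda>i. meval to_ac (f i) t / meval to_ac g t) [0..<n]);
           \<psi> = (\<lambda>x. map (\<lambda>j. meval to_ac (p j) x / meval to_ac q x) [0..<d]);
           W = {t. length t = d \<and> meval to_ac g t \<noteq> 0};
           U = {x\<in>V. meval to_ac q x \<noteq> 0 \<and> \<psi> x \<in> W};
           W' = {t\<in>W. meval to_ac q (\<phi> t) \<noteq> 0}
       in (\<forall>t\<in>W. \<phi> t \<in> V) \<and> zariski_dense_in n U V \<and> (\<forall>x\<in>U. \<phi> (\<psi> x) = x)
          \<and> W' \<noteq> {} \<and> (\<forall>t\<in>W'. \<psi> (\<phi> t) = t)))"

definition mat2 :: "'a::zero \<Rightarrow> 'a \<Rightarrow> 'a \<Rightarrow> 'a \<Rightarrow> 'a^2^2" where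
  "mat2 a b c d = (\<chi> i j. if i = 1 then (if j = 1 then a else b) else (if j = 1 then c else d))"

text \<open>Geometric points of S_I in SL(2) x SL(2), viewed inside affine 8-space:
  coordinates (x0,..,x7) with X = [[x0,x1],[x2,x3]], Y = [[x4,x5],[x6,x7]].\<close>
definition S_I :: "'k::field alg_closure list set" where
  "S_I = {x. length x = 8 \<and>
     (let MX = mat2 (x!0) (x!1) (x!2) (x!3); MY = mat2 (x!4) (x!5) (x!6) (x!7)
      in det MX = 1 \<and> det MY = 1 \<and>
         matrix_matrix_mult (matrix_matrix_mult (matrix_matrix_mult MX MY) (matrix_inv MX)) (matrix_inv MY) = mat 1)}"

end

theory Submission
  imports Defs
begin

text \<open>If \<open>X = [[t0, t1], [t2, (1 + t1 t2) / t0]]\<close> is not scalar, every \<open>Y\<close> commuting with \<open>X\<close> is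
  \<open>\<alpha> I + \<beta> X\<close>, and \<open>det Y = \<alpha>\<^sup>2 + \<tau> \<alpha> \<beta> + \<beta>\<^sup>2\<close> with \<open>\<tau> = tr X\<close>.  This conic has the rational point
  \<open>(1, -\<tau>)\<close> and is therefore parametrized by a rational parameter \<open>m\<close>; so \<open>(t0, t1, t2, m)\<close> are
  birational coordinates on \<open>S_I\<close>, and \<open>m\<close> is recovered from the entries of \<open>X\<close> and \<open>Y\<close>.

  The inverse map is defined on a Zariski dense subset of \<open>S_I\<close>: every commuting pair is
  \<open>(\<plusminus>C(s A), \<plusminus>C(u A))\<close> for the Cayley transform \<open>C\<close> of a traceless matrix \<open>A\<close>, and moving the
  parameters \<open>A, s, u\<close> along a line to those of an explicit generic pair gives a rational curve
  in \<open>S_I\<close> through the given pair that meets the non-generic locus in finitely many points only.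
  A polynomial vanishing on the generic pairs therefore vanishes along the whole curve.\<close>

section \<open>Evaluating multivariate polynomials\<close>

definition monom_eval :: "(nat \<Rightarrow>\<^sub>0 nat) \<Rightarrow> 'b::comm_ring_1 list \<Rightarrow> 'b" where
  "monom_eval m x = (\<Prod>i\<in>Poly_Mapping.keys m. (x ! i) ^ Poly_Mapping.lookup m i)"

lemma monom_eval_eq_prod_superset:
  assumes "finite S" "Poly_Mapping.keys m \<subseteq> S"
  shows "monom_eval m x = (\<Prod>i\<in>S. (x ! i) ^ Poly_Mapping.lookup m i)"
  unfolding monom_eval_def
  by (rule prod.mono_neutral_left) (use assms in \<open>auto simp: in_keys_iff\<close>)

lemma monom_eval_add: "monom_eval (a + b) x = monom_eval a x * monom_eval b x"
proof -
  let ?S = "Poly_Mapping.keys a \<union> Poly_Mapping.keys b"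
  have "monom_eval (a + b) x = (\<Prod>i\<in>?S. (x ! i) ^ Poly_Mapping.lookup (a + b) i)"
    by (rule monom_eval_eq_prod_superset) (auto dest: keys_add[THEN subsetD])
  also have "\<dots> = (\<Prod>i\<in>?S. (x ! i) ^ Poly_Mapping.lookup a i) *
                  (\<Prod>i\<in>?S. (x ! i) ^ Poly_Mapping.lookup b i)"
    by (simp add: lookup_add power_add prod.distrib)
  also have "\<dots> = monom_eval a x * monom_eval b x"
    using monom_eval_eq_prod_superset[of ?S a x] monom_eval_eq_prod_superset[of ?S b x] by simp
  finally show ?thesis .
qed

lemma monom_eval_zero [simp]: "monom_eval 0 x = 1"
  by (simp add: monom_eval_def)

lemma monom_eval_single [simp]: "monom_eval (Poly_Mapping.single i k) x = (x ! i) ^ k"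
  by (cases "k = 0") (simp_all add: monom_eval_def)

lemma meval_eq_sum_monom_eval:
  "meval e p x = (\<Sum>m\<in>Poly_Mapping.keys p. e (Poly_Mapping.lookup p m) * monom_eval m x)"
  by (simp add: meval_def monom_eval_def)

lemma meval_eq_sum_superset:
  assumes "finite S" "Poly_Mapping.keys p \<subseteq> S"
  shows "meval to_ac p x = (\<Sum>m\<in>S. to_ac (Poly_Mapping.lookup p m) * monom_eval m x)"
  unfolding meval_eq_sum_monom_eval
  by (rule sum.mono_neutral_left) (use assms in \<open>auto simp: in_keys_iff\<close>)

lemma meval_zero [simp]: "meval e 0 x = 0"
  by (simp add: meval_def)

lemma meval_add [simp]: "meval to_ac (p + q) x = meval to_ac p x + meval to_ac q x"
proof -
  let ?S = "Poly_Mapping.keys p \<union> Poly_Mapping.keys q"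
  have "meval to_ac (p + q) x = (\<Sum>m\<in>?S. to_ac (Poly_Mapping.lookup (p + q) m) * monom_eval m x)"
    by (rule meval_eq_sum_superset) (auto dest: keys_add[THEN subsetD])
  also have "\<dots> = (\<Sum>m\<in>?S. to_ac (Poly_Mapping.lookup p m) * monom_eval m x) +
                  (\<Sum>m\<in>?S. to_ac (Poly_Mapping.lookup q m) * monom_eval m x)"
    by (simp add: lookup_add distrib_right sum.distrib)
  also have "\<dots> = meval to_ac p x + meval to_ac q x"
    using meval_eq_sum_superset[of ?S p x] meval_eq_sum_superset[of ?S q x] by simp
  finally show ?thesis .
qed

lemma meval_single [simp]:
  "meval to_ac (Poly_Mapping.single m c) x = to_ac c * monom_eval m x"
  by (cases "c = 0") (simp_all add: meval_eq_sum_monom_eval)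

lemma meval_sum: "meval to_ac (\<Sum>a\<in>A. f a) x = (\<Sum>a\<in>A. meval to_ac (f a) x)"
  by (induction A rule: infinite_finite_induct) auto

lemma poly_mapping_eq_sum_single:
  "p = (\<Sum>m\<in>Poly_Mapping.keys p. Poly_Mapping.single m (Poly_Mapping.lookup p m))"
  by (rule poly_mapping_eqI) (simp add: lookup_sum lookup_single when_def in_keys_iff)

lemma meval_mult [simp]: "meval to_ac (p * q) x = meval to_ac p x * meval to_ac q x"
proof -
  let ?P = "Poly_Mapping.keys p" and ?Q = "Poly_Mapping.keys q"
  have "p * q = (\<Sum>m\<in>?P. Poly_Mapping.single m (Poly_Mapping.lookup p m)) *
                (\<Sum>n\<in>?Q. Poly_Mapping.single n (Poly_Mapping.lookup q n))"
    by (simp flip: poly_mapping_eq_sum_single)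
  also have "\<dots> = (\<Sum>m\<in>?P. \<Sum>n\<in>?Q.
      Poly_Mapping.single (m + n) (Poly_Mapping.lookup p m * Poly_Mapping.lookup q n))"
    by (simp add: sum_distrib_left sum_distrib_right mult_single) (rule sum.swap)
  finally have "meval to_ac (p * q) x = (\<Sum>m\<in>?P. \<Sum>n\<in>?Q.
      to_ac (Poly_Mapping.lookup p m) * monom_eval m x *
      (to_ac (Poly_Mapping.lookup q n) * monom_eval n x))"
    by (simp add: meval_sum monom_eval_add mult_ac)
  also have "\<dots> = meval to_ac p x * meval to_ac q x"
    by (simp add: meval_eq_sum_monom_eval sum_distrib_left sum_distrib_right) (rule sum.swap)
  finally show ?thesis .
qed

definition Var :: "nat \<Rightarrow> 'a::{zero,one} mpoly" where
  "Var i = Poly_Mapping.single (Poly_Mapping.single i 1) 1"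

lemma meval_Var [simp]: "meval to_ac (Var i) x = x ! i"
  by (simp add: Var_def)

lemma meval_one [simp]: "meval to_ac 1 x = 1"
  by (simp flip: single_one)

lemma meval_uminus [simp]: "meval to_ac (- p) x = - meval to_ac p x"
proof -
  have "meval to_ac (- p) x + meval to_ac p x = 0"
    using meval_add[of "- p" p x] by simp
  then show ?thesis
    by (simp add: eq_neg_iff_add_eq_0)
qed

lemma meval_diff [simp]: "meval to_ac (p - q) x = meval to_ac p x - meval to_ac q x"
  using meval_add[of "p - q" q x] by (simp add: algebra_simps)

lemma meval_power [simp]: "meval to_ac (p ^ n) x = meval to_ac p x ^ n"
  by (induction n) auto

lemma meval_numeral [simp]: "meval to_ac (numeral n) x = numeral n"
proof -
  have "meval to_ac (of_nat k) x = of_nat k" for k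
    by (induction k) auto
  then show ?thesis
    by (metis of_nat_numeral)
qed

lemma mpoly_vars_add: "mpoly_vars (p + q) \<subseteq> mpoly_vars p \<union> mpoly_vars q"
  unfolding mpoly_vars_def using keys_add[of p q] by auto

lemma mpoly_vars_mult: "mpoly_vars (p * q :: 'a::comm_ring_1 mpoly) \<subseteq> mpoly_vars p \<union> mpoly_vars q"
proof
  fix i assume "i \<in> mpoly_vars (p * q)"
  then obtain m where m: "m \<in> Poly_Mapping.keys (p * q)" "i \<in> Poly_Mapping.keys m"
    unfolding mpoly_vars_def by auto
  from m(1) obtain a b where "m = a + b" "a \<in> Poly_Mapping.keys p" "b \<in> Poly_Mapping.keys q"
    using keys_mult[of p q] by blast
  with m(2) show "i \<in> mpoly_vars p \<union> mpoly_vars q"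
    unfolding mpoly_vars_def using keys_add[of a b] by auto
qed

lemma poly_in_add: "poly_in n p \<Longrightarrow> poly_in n q \<Longrightarrow> poly_in n (p + q)"
  unfolding poly_in_def using mpoly_vars_add[of p q] by auto

lemma poly_in_mult:
  "poly_in n p \<Longrightarrow> poly_in n q \<Longrightarrow> poly_in n (p * q :: 'a::comm_ring_1 mpoly)"
  unfolding poly_in_def using mpoly_vars_mult[of p q] by auto

lemma poly_in_uminus: "poly_in n p \<Longrightarrow> poly_in n (- p :: 'a::ab_group_add mpoly)"
  unfolding poly_in_def mpoly_vars_def by simp

lemma poly_in_diff:
  "poly_in n p \<Longrightarrow> poly_in n q \<Longrightarrow> poly_in n (p - q :: 'a::ab_group_add mpoly)"
  unfolding poly_in_def mpoly_vars_def using keys_diff[of p q] by blast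

lemma poly_in_zero: "poly_in n 0"
  unfolding poly_in_def mpoly_vars_def by simp

lemma poly_in_one: "poly_in n (1 :: 'a::comm_ring_1 mpoly)"
  unfolding poly_in_def mpoly_vars_def by (simp flip: single_one)

lemma poly_in_numeral: "poly_in n (numeral k :: 'a::comm_ring_1 mpoly)"
proof -
  have "poly_in n (of_nat j :: 'a mpoly)" for j
    by (induction j) (auto intro: poly_in_add poly_in_one poly_in_zero)
  then show ?thesis
    by (metis of_nat_numeral)
qed

lemma poly_in_power: "poly_in n p \<Longrightarrow> poly_in n (p ^ k :: 'a::comm_ring_1 mpoly)"
  by (induction k) (auto intro: poly_in_mult poly_in_one)

lemma poly_in_Var: "i < n \<Longrightarrow> poly_in n (Var i :: 'a::comm_ring_1 mpoly)"
  unfolding poly_in_def mpoly_vars_def Var_def by simp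

lemmas poly_in_intros = poly_in_zero poly_in_one poly_in_numeral poly_in_Var
  poly_in_add poly_in_mult poly_in_uminus poly_in_diff poly_in_power

lemma k_rational_of_dimI:
  fixes f p :: "nat \<Rightarrow> 'k::field mpoly" and g q :: "'k mpoly"
    and G Q :: "'k alg_closure list \<Rightarrow> 'k alg_closure"
    and \<phi> \<psi> :: "'k alg_closure list \<Rightarrow> 'k alg_closure list"
  assumes "V \<subseteq> {x. length x = n}"
    and "\<forall>i<n. poly_in d (f i)" "poly_in d g" "\<forall>j<d. poly_in n (p j)" "poly_in n q"
    and G: "\<And>t. meval to_ac g t = G t" and Q: "\<And>x. meval to_ac q x = Q x"
    and \<phi>: "\<And>t. map (\<lambda>i. meval to_ac (f i) t / G t) [0..<n] = \<phi> t"
    and \<psi>: "\<And>x. map (\<lambda>j. meval to_ac (p j) x / Q x) [0..<d] = \<psi> x"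
    and "\<And>t. length t = d \<Longrightarrow> G t \<noteq> 0 \<Longrightarrow> \<phi> t \<in> V"
    and "zariski_dense_in n {x \<in> V. Q x \<noteq> 0 \<and> G (\<psi> x) \<noteq> 0} V"
    and "\<And>x. x \<in> V \<Longrightarrow> Q x \<noteq> 0 \<Longrightarrow> G (\<psi> x) \<noteq> 0 \<Longrightarrow> \<phi> (\<psi> x) = x"
    and "length t' = d" "G t' \<noteq> 0" "Q (\<phi> t') \<noteq> 0"
    and "\<And>t. length t = d \<Longrightarrow> G t \<noteq> 0 \<Longrightarrow> Q (\<phi> t) \<noteq> 0 \<Longrightarrow> \<psi> (\<phi> t) = t"
  shows "k_rational_of_dim d n V"
proof -
  have len: "length (\<psi> x) = d" for x
    using \<psi>[of x, symmetric] by simp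
  show ?thesis
    unfolding k_rational_of_dim_def Let_def
    apply (rule conjI[OF assms(1)])
    apply (rule exI[of _ f], rule exI[of _ g], rule exI[of _ p], rule exI[of _ q])
    using assms(2-5,10-) len by (auto simp: G Q \<phi> \<psi>)
qed

section \<open>Rational functions of one variable\<close>

definition rational_regular_at :: "'a::field \<Rightarrow> ('a \<Rightarrow> 'a) \<Rightarrow> bool" where
  "rational_regular_at b f \<longleftrightarrow>
     (\<exists>P Q. poly Q b \<noteq> 0 \<and> (\<forall>s. poly Q s \<noteq> 0 \<longrightarrow> f s = poly P s / poly Q s))"

lemma rational_regular_atI:
  assumes "poly Q b \<noteq> 0" "\<And>s. poly Q s \<noteq> 0 \<Longrightarrow> f s = poly P s / poly Q s"
  shows "rational_regular_at b f"
  using assms unfolding rational_regular_at_def by blast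

lemma rational_regular_at_const: "rational_regular_at b (\<lambda>s. c)"
  by (rule rational_regular_atI[of 1 _ _ "[:c:]"]) simp_all

lemma rational_regular_at_ident: "rational_regular_at b (\<lambda>s. s)"
  by (rule rational_regular_atI[of 1 _ _ "[:0, 1:]"]) simp_all

lemma rational_regular_at_add:
  assumes "rational_regular_at b f" "rational_regular_at b g"
  shows "rational_regular_at b (\<lambda>s. f s + g s)"
proof -
  obtain P1 Q1 where 1: "poly Q1 b \<noteq> 0" "\<And>s. poly Q1 s \<noteq> 0 \<Longrightarrow> f s = poly P1 s / poly Q1 s"
    using assms(1) unfolding rational_regular_at_def by blast
  obtain P2 Q2 where 2: "poly Q2 b \<noteq> 0" "\<And>s. poly Q2 s \<noteq> 0 \<Longrightarrow> g s = poly P2 s / poly Q2 s"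
    using assms(2) unfolding rational_regular_at_def by blast
  show ?thesis
  proof (rule rational_regular_atI[of "Q1 * Q2" _ _ "P1 * Q2 + P2 * Q1"])
    fix s
    assume "poly (Q1 * Q2) s \<noteq> 0"
    then show "f s + g s = poly (P1 * Q2 + P2 * Q1) s / poly (Q1 * Q2) s"
      using 1(2)[of s] 2(2)[of s] by (simp add: field_simps)
  qed (use 1 2 in simp)
qed

lemma rational_regular_at_mult:
  assumes "rational_regular_at b f" "rational_regular_at b g"
  shows "rational_regular_at b (\<lambda>s. f s * g s)"
proof -
  obtain P1 Q1 where 1: "poly Q1 b \<noteq> 0" "\<And>s. poly Q1 s \<noteq> 0 \<Longrightarrow> f s = poly P1 s / poly Q1 s"
    using assms(1) unfolding rational_regular_at_def by blast
  obtain P2 Q2 where 2: "poly Q2 b \<noteq> 0" "\<And>s. poly Q2 s \<noteq> 0 \<Longrightarrow> g s = poly P2 s / poly Q2 s"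
    using assms(2) unfolding rational_regular_at_def by blast
  show ?thesis
  proof (rule rational_regular_atI[of "Q1 * Q2" _ _ "P1 * P2"])
    fix s
    assume "poly (Q1 * Q2) s \<noteq> 0"
    then show "f s * g s = poly (P1 * P2) s / poly (Q1 * Q2) s"
      using 1(2)[of s] 2(2)[of s] by simp
  qed (use 1 2 in simp)
qed

lemma rational_regular_at_diff:
  assumes "rational_regular_at b f" "rational_regular_at b g"
  shows "rational_regular_at b (\<lambda>s. f s - g s)"
  using rational_regular_at_add[OF assms(1)
      rational_regular_at_mult[OF rational_regular_at_const assms(2)], of "- 1"]
  by simp

lemma rational_regular_at_power:
  "rational_regular_at b f \<Longrightarrow> rational_regular_at b (\<lambda>s. f s ^ n)"
  by (induction n) (simp_all add: rational_regular_at_mult rational_regular_at_const)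

lemma rational_regular_at_divide:
  assumes "rational_regular_at b f" "rational_regular_at b g" "g b \<noteq> 0"
  shows "rational_regular_at b (\<lambda>s. f s / g s)"
proof -
  obtain P1 Q1 where 1: "poly Q1 b \<noteq> 0" "\<And>s. poly Q1 s \<noteq> 0 \<Longrightarrow> f s = poly P1 s / poly Q1 s"
    using assms(1) unfolding rational_regular_at_def by blast
  obtain P2 Q2 where 2: "poly Q2 b \<noteq> 0" "\<And>s. poly Q2 s \<noteq> 0 \<Longrightarrow> g s = poly P2 s / poly Q2 s"
    using assms(2) unfolding rational_regular_at_def by blast
  have "poly P2 b \<noteq> 0"
    using 2 assms(3) by auto
  show ?thesis
  proof (rule rational_regular_atI[of "Q1 * Q2 * P2" _ _ "P1 * Q2 * Q2"])
    fix s
    assume "poly (Q1 * Q2 * P2) s \<noteq> 0"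
    then have "poly Q1 s \<noteq> 0" "poly Q2 s \<noteq> 0" "poly P2 s \<noteq> 0"
      by auto
    then show "f s / g s = poly (P1 * Q2 * Q2) s / poly (Q1 * Q2 * P2) s"
      by (simp add: 1(2) 2(2) field_simps)
  qed (use 1 2 \<open>poly P2 b \<noteq> 0\<close> in simp)
qed

lemma rational_regular_at_sum:
  "(\<And>a. a \<in> A \<Longrightarrow> rational_regular_at b (f a)) \<Longrightarrow> rational_regular_at b (\<lambda>s. \<Sum>a\<in>A. f a s)"
  by (induction A rule: infinite_finite_induct)
     (auto intro: rational_regular_at_add rational_regular_at_const)

lemma rational_regular_at_prod:
  "(\<And>a. a \<in> A \<Longrightarrow> rational_regular_at b (f a)) \<Longrightarrow> rational_regular_at b (\<lambda>s. \<Prod>a\<in>A. f a s)"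
  by (induction A rule: infinite_finite_induct)
     (auto intro: rational_regular_at_mult rational_regular_at_const)

lemmas rational_regular_at_intros = rational_regular_at_const rational_regular_at_ident
  rational_regular_at_add rational_regular_at_mult rational_regular_at_diff
  rational_regular_at_power rational_regular_at_divide

lemma rational_regular_at_meval:
  assumes "poly_in n p" "\<And>i. i < n \<Longrightarrow> rational_regular_at b (\<lambda>s. xs s ! i)"
  shows "rational_regular_at b (\<lambda>s. meval e p (xs s))"
proof -
  have "i < n" if "m \<in> Poly_Mapping.keys p" "i \<in> Poly_Mapping.keys m" for m i
    using assms(1) that unfolding poly_in_def mpoly_vars_def by auto
  then show ?thesis
    unfolding meval_def by (intro rational_regular_at_sum rational_regular_at_mult
        rational_regular_at_prod rational_regular_at_power rational_regular_at_const assms(2))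
qed

lemma finite_zeros_if_rational_regular_at:
  assumes "rational_regular_at b f" "f b \<noteq> 0"
  shows "finite {s. f s = 0}"
proof -
  obtain P Q where PQ: "poly Q b \<noteq> 0" "\<And>s. poly Q s \<noteq> 0 \<Longrightarrow> f s = poly P s / poly Q s"
    using assms(1) unfolding rational_regular_at_def by blast
  then have "P \<noteq> 0" "Q \<noteq> 0"
    using assms(2) by auto
  then have "finite ({s. poly P s = 0} \<union> {s. poly Q s = 0})"
    by (simp add: poly_roots_finite)
  moreover have "{s. f s = 0} \<subseteq> {s. poly P s = 0} \<union> {s. poly Q s = 0}"
    using PQ by auto
  ultimately show ?thesis
    by (rule finite_subset[rotated])
qed

lemma rational_regular_at_eq_0_if_cofinite_zero:
  assumes "infinite (UNIV :: 'a::field set)" "rational_regular_at b f"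
    and "finite B" "\<And>s. s \<notin> B \<Longrightarrow> f s = (0 :: 'a)"
  shows "f b = 0"
proof -
  obtain P Q where PQ: "poly Q b \<noteq> 0" "\<And>s. poly Q s \<noteq> 0 \<Longrightarrow> f s = poly P s / poly Q s"
    using assms(2) unfolding rational_regular_at_def by blast
  then have "Q \<noteq> 0"
    by auto
  then have "finite (B \<union> {s. poly Q s = 0})"
    using assms(3) by (auto simp: poly_roots_finite)
  then have "infinite (UNIV - (B \<union> {s. poly Q s = 0}))"
    using assms(1) by (simp add: Diff_infinite_finite)
  moreover have "poly P s = 0" if "s \<notin> B" "poly Q s \<noteq> 0" for s
    using PQ(2)[OF that(2)] assms(4)[OF that(1)] that(2) by simp
  then have "UNIV - (B \<union> {s. poly Q s = 0}) \<subseteq> {s. poly P s = 0}"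
    by auto
  ultimately have "P = 0"
    using poly_roots_finite finite_subset by blast
  then show ?thesis
    using PQ by simp
qed

lemma zariski_dense_in_if_curves:
  fixes U V :: "'a::field list set"
  assumes "infinite (UNIV :: 'a set)" "U \<subseteq> V"
    and curves: "\<And>x. x \<in> V \<Longrightarrow> \<exists>\<gamma>. \<gamma> 0 = x \<and> (\<forall>i<n. rational_regular_at 0 (\<lambda>r. \<gamma> r ! i)) \<and>
        finite {r. \<gamma> r \<notin> U}"
  shows "zariski_dense_in n U V"
proof -
  have "meval id p x = 0" if p: "poly_in n p" "\<forall>y\<in>U. meval id p y = 0" and "x \<in> V" for p x
  proof -
    obtain \<gamma> where \<gamma>: "\<gamma> 0 = x" "\<And>i. i < n \<Longrightarrow> rational_regular_at 0 (\<lambda>r. \<gamma> r ! i)"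
      "finite {r. \<gamma> r \<notin> U}"
      using curves[OF \<open>x \<in> V\<close>] by blast
    have "rational_regular_at 0 (\<lambda>r. meval id p (\<gamma> r))"
      using p(1) \<gamma>(2) by (rule rational_regular_at_meval)
    then have "meval id p (\<gamma> 0) = 0"
      by (rule rational_regular_at_eq_0_if_cofinite_zero[OF assms(1) _ \<gamma>(3)]) (use p(2) in blast)
    then show ?thesis
      using \<gamma>(1) by simp
  qed
  then show ?thesis
    using assms(2) unfolding zariski_dense_in_def by blast
qed

section \<open>Commuting pairs in SL(2)\<close>

lemma mat2_nth [simp]:
  "mat2 a b c d $ 1 $ 1 = a" "mat2 a b c d $ 1 $ 2 = b"
  "mat2 a b c d $ 2 $ 1 = c" "mat2 a b c d $ 2 $ 2 = d"
  by (simp_all add: mat2_def)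

lemma mat2_eq_iff: "mat2 a b c d = mat2 a' b' c' d' \<longleftrightarrow> a = a' \<and> b = b' \<and> c = c' \<and> d = d'"
  by (auto simp: vec_eq_iff forall_2)

lemma mat2_mult:
  "(mat2 a b c d :: 'a::comm_ring_1^2^2) ** mat2 e f g h =
     mat2 (a*e + b*g) (a*f + b*h) (c*e + d*g) (c*f + d*h)"
  by (simp add: vec_eq_iff forall_2 matrix_matrix_mult_def sum_2)

lemma mat_1_eq_mat2: "(mat 1 :: 'a::comm_ring_1^2^2) = mat2 1 0 0 1"
  by (simp add: vec_eq_iff forall_2 mat_def)

lemma det_mat2: "det (mat2 a b c d :: 'a::comm_ring_1^2^2) = a * d - b * c"
  by (simp add: det_2)

lemma matrix_inv_eqI:
  fixes A B :: "'a::comm_ring_1^'n^'n"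
  assumes "A ** B = mat 1" "B ** A = mat 1"
  shows "matrix_inv A = B"
proof -
  define C where "C = matrix_inv A"
  have "A ** C = mat 1 \<and> C ** A = mat 1"
    unfolding C_def matrix_inv_def by (rule someI[of _ B]) (use assms in blast)
  then have "C = C ** (A ** B)" "C ** A = mat 1"
    by (simp_all add: assms)
  then show ?thesis
    by (simp add: C_def matrix_mul_assoc)
qed

lemma matrix_inv_mat2:
  "a * d - b * c = (1::'a::comm_ring_1) \<Longrightarrow> matrix_inv (mat2 a b c d) = mat2 d (- b) (- c) a"
  by (rule matrix_inv_eqI) (simp_all add: mat2_mult mat_1_eq_mat2 mat2_eq_iff algebra_simps)

lemma commutator_eq_1_iff_commute:
  fixes A B A' B' :: "'a::comm_ring_1^'n^'n"
  assumes "A ** A' = mat 1" "A' ** A = mat 1" "B ** B' = mat 1" "B' ** B = mat 1"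
  shows "((A ** B) ** A') ** B' = mat 1 \<longleftrightarrow> A ** B = B ** A"
proof
  assume commutator: "((A ** B) ** A') ** B' = mat 1"
  have "(A ** B) ** A' = (((A ** B) ** A') ** B') ** B"
    by (simp add: assms flip: matrix_mul_assoc)
  then have "((A ** B) ** A') ** A = B ** A"
    by (simp add: commutator)
  then show "A ** B = B ** A"
    by (simp add: assms flip: matrix_mul_assoc)
next
  assume "A ** B = B ** A"
  then show "((A ** B) ** A') ** B' = mat 1"
    by (simp add: assms flip: matrix_mul_assoc)
qed

lemma mem_S_I_iff:
  "x \<in> (S_I :: 'k::field alg_closure list set) \<longleftrightarrow> length x = 8 \<and>
     x!0 * x!3 - x!1 * x!2 = 1 \<and> x!4 * x!7 - x!5 * x!6 = 1 \<and> x!1 * x!6 = x!5 * x!2 \<and>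
     x!0 * x!5 + x!1 * x!7 = x!4 * x!1 + x!5 * x!3 \<and> x!2 * x!4 + x!3 * x!6 = x!6 * x!0 + x!7 * x!2"
proof -
  let ?X = "mat2 (x!0) (x!1) (x!2) (x!3)" and ?Y = "mat2 (x!4) (x!5) (x!6) (x!7)"
  have "(det ?X = 1 \<and> det ?Y = 1 \<and> ((?X ** ?Y) ** matrix_inv ?X) ** matrix_inv ?Y = mat 1) \<longleftrightarrow>
     (x!0 * x!3 - x!1 * x!2 = 1 \<and> x!4 * x!7 - x!5 * x!6 = 1 \<and> ?X ** ?Y = ?Y ** ?X)"
  proof (cases "x!0 * x!3 - x!1 * x!2 = 1 \<and> x!4 * x!7 - x!5 * x!6 = 1")
    case True
    then show ?thesis
      by (subst commutator_eq_1_iff_commute)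
         (simp_all add: det_mat2 matrix_inv_mat2 mat2_mult mat_1_eq_mat2 mat2_eq_iff algebra_simps)
  qed (auto simp: det_mat2)
  then show ?thesis
    unfolding S_I_def mem_Collect_eq Let_def by (auto simp: mat2_mult mat2_eq_iff algebra_simps)
qed

lemma S_I_elim:
  assumes "x \<in> S_I"
  obtains x0 x1 x2 x3 x4 x5 x6 x7 where "x = [x0, x1, x2, x3, x4, x5, x6, x7]"
    "x0 * x3 - x1 * x2 = 1" "x4 * x7 - x5 * x6 = 1"
    "x1 * x6 = x5 * x2" "x0 * x5 + x1 * x7 = x4 * x1 + x5 * x3"
    "x2 * x4 + x3 * x6 = x6 * x0 + x7 * x2"
proof -
  have "length x = 8"
    using assms by (simp add: mem_S_I_iff)
  then have "x = [x!0, x!1, x!2, x!3, x!4, x!5, x!6, x!7]"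
    by (simp add: list_eq_iff_nth_eq less_Suc_eq numeral_eq_Suc nth_Cons split: nat.splits)
  then show ?thesis
    using assms that unfolding mem_S_I_iff by metis
qed

section \<open>A rational parametrization of commuting pairs\<close>

definition conic_den :: "'a::comm_ring_1 \<Rightarrow> 'a \<Rightarrow> 'a \<Rightarrow> 'a \<Rightarrow> 'a" where
  "conic_den t0 t1 t2 m = t0 * m^2 + m * (t0^2 + 1 + t1 * t2) + t0"

definition conic_num :: "'a::comm_ring_1 \<Rightarrow> 'a \<Rightarrow> 'a \<Rightarrow> 'a \<Rightarrow> 'a" where
  "conic_num t0 t1 t2 m = 2 * m * t0 + (t0^2 + 1 + t1 * t2)"

definition param_den :: "'a::comm_ring_1 \<Rightarrow> 'a \<Rightarrow> 'a \<Rightarrow> 'a \<Rightarrow> 'a" where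
  "param_den t0 t1 t2 m = t0 * conic_den t0 t1 t2 m"

text \<open>With \<open>E\<close> and \<open>N\<close> the values of \<^const>\<open>conic_den\<close> and \<^const>\<open>conic_num\<close>, these are the
  entries of \<open>X = [[t0, t1], [t2, (1 + t1 t2) / t0]]\<close> and \<open>Y = (t0 (1 - m^2) I - N X) / E\<close>,
  multiplied by the common denominator \<open>t0 E\<close>.\<close>

definition param_nums :: "'a::comm_ring_1 \<Rightarrow> 'a \<Rightarrow> 'a \<Rightarrow> 'a \<Rightarrow> 'a list" where
  "param_nums t0 t1 t2 m =
     (let E = conic_den t0 t1 t2 m; N = conic_num t0 t1 t2 m; c = t0^2 * (1 - m^2) in
     [t0^2 * E, t0 * t1 * E, t0 * t2 * E, (1 + t1 * t2) * E,
      c - t0^2 * N, - (t0 * t1 * N), - (t0 * t2 * N), c - (1 + t1 * t2) * N])"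

definition comm_param :: "'a::field list \<Rightarrow> 'a list" where
  "comm_param t =
     map (\<lambda>y. y / param_den (t!0) (t!1) (t!2) (t!3)) (param_nums (t!0) (t!1) (t!2) (t!3))"

definition coord_nums :: "'a::comm_ring_1 \<Rightarrow> 'a \<Rightarrow> 'a \<Rightarrow> 'a \<Rightarrow> 'a \<Rightarrow> 'a list" where
  "coord_nums x0 x1 x2 x4 x5 =
     [x0 * (x1 * x5), x1 * (x1 * x5), x2 * (x1 * x5), x1 * (x1 * (x4 - 1) - x0 * x5)]"

definition comm_coords :: "'a::field list \<Rightarrow> 'a list" where
  "comm_coords x = map (\<lambda>y. y / (x!1 * x!5)) (coord_nums (x!0) (x!1) (x!2) (x!4) (x!5))"

definition generic_pair :: "'a::field list \<Rightarrow> bool" where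
  "generic_pair x \<longleftrightarrow> x!1 * x!5 \<noteq> 0 \<and>
     param_den (comm_coords x ! 0) (comm_coords x ! 1) (comm_coords x ! 2) (comm_coords x ! 3) \<noteq> 0"

lemma length_coord_nums [simp]: "length (coord_nums x0 x1 x2 x4 x5) = 4"
  by (simp add: coord_nums_def)

lemma length_comm_coords [simp]: "length (comm_coords x) = 4"
  by (simp add: comm_coords_def)

lemma comm_coords_eq:
  "x!1 * x!5 \<noteq> 0 \<Longrightarrow> comm_coords x = [x!0, x!1, x!2, (x!1 * (x!4 - 1) - x!0 * x!5) / x!5]"
  by (simp add: comm_coords_def coord_nums_def)

lemma comm_param_mem_S_I:
  fixes t :: "'k::field alg_closure list"
  assumes "param_den (t!0) (t!1) (t!2) (t!3) \<noteq> 0"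
  shows "comm_param t \<in> S_I"
proof -
  define g where "g = param_den (t!0) (t!1) (t!2) (t!3)"
  define E where "E = conic_den (t!0) (t!1) (t!2) (t!3)"
  define N where "N = conic_num (t!0) (t!1) (t!2) (t!3)"
  have "g \<noteq> 0"
    using assms by (simp add: g_def)
  have g: "g = t!0 * E"
    and E: "E = t!0 * (t!3)^2 + t!3 * ((t!0)^2 + 1 + t!1 * t!2) + t!0"
    and N: "N = 2 * t!3 * t!0 + ((t!0)^2 + 1 + t!1 * t!2)"
    by (simp_all add: g_def param_den_def E_def N_def conic_den_def conic_num_def)
  show ?thesis
    unfolding mem_S_I_iff comm_param_def param_nums_def Let_def
      g_def[symmetric] E_def[symmetric] N_def[symmetric]
    by (simp add: field_simps \<open>g \<noteq> 0\<close>) (simp add: g E N, intro conjI; Groebner_Basis.algebra)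
qed

lemma comm_param_comm_coords:
  fixes x :: "'k::field alg_closure list"
  assumes x: "x \<in> S_I" and "generic_pair x"
  shows "comm_param (comm_coords x) = x"
proof -
  obtain x0 x1 x2 x3 x4 x5 x6 x7 where xs: "x = [x0, x1, x2, x3, x4, x5, x6, x7]"
    and SL: "x0 * x3 - x1 * x2 = 1" "x4 * x7 - x5 * x6 = 1"
    and comm: "x1 * x6 = x5 * x2" "x0 * x5 + x1 * x7 = x4 * x1 + x5 * x3"
      "x2 * x4 + x3 * x6 = x6 * x0 + x7 * x2"
    using x by (rule S_I_elim)
  have "x1 \<noteq> 0" "x5 \<noteq> 0"
    using assms(2) by (simp_all add: generic_pair_def xs)
  define m where "m = (x1 * (x4 - 1) - x0 * x5) / x5"
  have m: "m * x5 = x1 * (x4 - 1) - x0 * x5"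
    using \<open>x5 \<noteq> 0\<close> by (simp add: m_def)
  have coords: "comm_coords x = [x0, x1, x2, m]"
    using \<open>x1 \<noteq> 0\<close> \<open>x5 \<noteq> 0\<close> by (simp add: comm_coords_eq xs m_def)
  define E where "E = conic_den x0 x1 x2 m"
  define N where "N = conic_num x0 x1 x2 m"
  have E: "E = x0 * m^2 + m * (x0^2 + 1 + x1 * x2) + x0"
    and N: "N = 2 * m * x0 + (x0^2 + 1 + x1 * x2)"
    by (simp_all add: E_def N_def conic_den_def conic_num_def)
  have "x0 * E \<noteq> 0"
    using assms(2) by (simp add: generic_pair_def coords param_den_def E_def)
  have X: "x0^2 * E = x0 * (x0 * E)" "x0 * x1 * E = x1 * (x0 * E)" "x0 * x2 * E = x2 * (x0 * E)"
    "(1 + x1 * x2) * E = x3 * (x0 * E)"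
    using SL(1) by (simp_all add: algebra_simps power2_eq_square)
  have Y: "x0^2 * (1 - m^2) - x0^2 * N = x4 * (x0 * E)" "- (x0 * x1 * N) = x5 * (x0 * E)"
    "- (x0 * x2 * N) = x6 * (x0 * E)" "x0^2 * (1 - m^2) - (1 + x1 * x2) * N = x7 * (x0 * E)"
    using SL comm m \<open>x1 \<noteq> 0\<close> \<open>x5 \<noteq> 0\<close> unfolding E N by Groebner_Basis.algebra+
  have "param_nums x0 x1 x2 m = map (\<lambda>y. y * (x0 * E)) x"
    unfolding param_nums_def Let_def E_def[symmetric] N_def[symmetric] xs list.map X Y ..
  then show ?thesis
    using \<open>x0 * E \<noteq> 0\<close> by (simp add: comm_param_def coords param_den_def E_def[symmetric] map_idI)
qed

lemma comm_coords_comm_param: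
  fixes t :: "'a::field list"
  assumes "length t = 4" "param_den (t!0) (t!1) (t!2) (t!3) \<noteq> 0"
    and "comm_param t ! 1 * comm_param t ! 5 \<noteq> 0"
  shows "comm_coords (comm_param t) = t"
proof -
  obtain t0 t1 t2 m where t: "t = [t0, t1, t2, m]"
    using assms(1) by (auto simp: length_Suc_conv numeral_eq_Suc)
  define E where "E = conic_den t0 t1 t2 m"
  define N where "N = conic_num t0 t1 t2 m"
  have "t0 \<noteq> 0" "E \<noteq> 0"
    using assms(2) by (simp_all add: param_den_def t E_def)
  let ?x = "comm_param t"
  have x: "?x ! 0 = t0" "?x ! 1 = t1" "?x ! 2 = t2"
    "?x ! 4 = (t0^2 * (1 - m^2) - t0^2 * N) / (t0 * E)" "?x ! 5 = - (t0 * t1 * N) / (t0 * E)"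
    using \<open>t0 \<noteq> 0\<close> \<open>E \<noteq> 0\<close>
    by (simp_all add: comm_param_def param_nums_def param_den_def Let_def t E_def N_def
        power2_eq_square)
  have "t1 * (t0^2 * (1 - m^2) - t0^2 * N - t0 * E) + t0 * t0 * t1 * N = m * (- (t0 * t1 * N))"
    unfolding E_def N_def conic_den_def conic_num_def by Groebner_Basis.algebra
  then have "(t1 * (?x ! 4 - 1) - t0 * ?x ! 5) / ?x ! 5 = m"
    using \<open>t0 \<noteq> 0\<close> \<open>E \<noteq> 0\<close> assms(3) unfolding x
    by (simp add: field_simps) Groebner_Basis.algebra
  then have "comm_coords ?x = [t0, t1, t2, m]"
    using comm_coords_eq[OF assms(3)] unfolding x by simp
  then show ?thesis
    by (simp add: t)
qed

lemma meval_param_den [simp]: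
  "meval to_ac (param_den (Var 0) (Var 1) (Var 2) (Var 3)) t = param_den (t!0) (t!1) (t!2) (t!3)"
  by (simp add: param_den_def conic_den_def)

lemma map_meval_param_nums:
  "map (\<lambda>i. meval to_ac (param_nums (Var 0) (Var 1) (Var 2) (Var 3) ! i) t /
       param_den (t!0) (t!1) (t!2) (t!3)) [0..<8] = comm_param t"
  by (simp add: upt_rec comm_param_def param_nums_def conic_den_def conic_num_def Let_def)

lemma map_meval_coord_nums:
  "map (\<lambda>j. meval to_ac (coord_nums (Var 0) (Var 1) (Var 2) (Var 4) (Var 5) ! j) x / (x!1 * x!5))
     [0..<4] = comm_coords x"
  by (simp add: upt_rec comm_coords_def coord_nums_def)

lemma poly_in_param_nums:
  "i < 8 \<Longrightarrow> poly_in 4 (param_nums (Var 0) (Var 1) (Var 2) (Var 3) ! i :: 'a::comm_ring_1 mpoly)"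
  by (auto simp: param_nums_def conic_den_def conic_num_def Let_def less_Suc_eq numeral_eq_Suc
      intro!: poly_in_intros)

lemma poly_in_param_den:
  "poly_in 4 (param_den (Var 0) (Var 1) (Var 2) (Var 3) :: 'a::comm_ring_1 mpoly)"
  by (auto simp: param_den_def conic_den_def intro!: poly_in_intros)

lemma poly_in_coord_nums:
  "j < 4 \<Longrightarrow>
    poly_in 8 (coord_nums (Var 0) (Var 1) (Var 2) (Var 4) (Var 5) ! j :: 'a::comm_ring_1 mpoly)"
  by (auto simp: coord_nums_def less_Suc_eq numeral_eq_Suc intro!: poly_in_intros)

section \<open>Density of the generic commuting pairs\<close>

definition cayley_den :: "'a::comm_ring_1 \<Rightarrow> 'a \<Rightarrow> 'a \<Rightarrow> 'a" where
  "cayley_den a0 a1 a2 = 1 - (a0^2 + a1 * a2)"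

text \<open>The entries of \<open>e (I + A) (I - A)\<^sup>-\<^sup>1\<close> for the traceless matrix \<open>A = [[a0, a1], [a2, -a0]]\<close>;
  since \<open>A\<^sup>2 = (a0\<^sup>2 + a1 a2) I\<close>, this is \<open>e (I + A)\<^sup>2 / cayley_den a0 a1 a2\<close>.\<close>

definition cayley :: "'a::field \<Rightarrow> 'a \<Rightarrow> 'a \<Rightarrow> 'a \<Rightarrow> 'a list" where
  "cayley e a0 a1 a2 = (let D = a0^2 + a1 * a2 in
     map (\<lambda>y. e * y / cayley_den a0 a1 a2) [1 + D + 2 * a0, 2 * a1, 2 * a2, 1 + D - 2 * a0])"

definition cayley_pair :: "'a::field \<Rightarrow> 'a \<Rightarrow> 'a \<Rightarrow> 'a \<Rightarrow> 'a \<Rightarrow> 'a \<Rightarrow> 'a \<Rightarrow> 'a list" where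
  "cayley_pair e1 e2 w0 w1 w2 s u =
     cayley e1 (s * w0) (s * w1) (s * w2) @ cayley e2 (u * w0) (u * w1) (u * w2)"

lemma cayley_pair_mem_S_I:
  fixes e1 e2 :: "'k::field alg_closure"
  assumes "e1^2 = 1" "e2^2 = 1"
    and "cayley_den (s * w0) (s * w1) (s * w2) \<noteq> 0" "cayley_den (u * w0) (u * w1) (u * w2) \<noteq> 0"
  shows "cayley_pair e1 e2 w0 w1 w2 s u \<in> S_I"
proof -
  define c1 where "c1 = cayley_den (s * w0) (s * w1) (s * w2)"
  define c2 where "c2 = cayley_den (u * w0) (u * w1) (u * w2)"
  have "c1 \<noteq> 0" "c2 \<noteq> 0"
    using assms(3,4) by (simp_all add: c1_def c2_def)
  have c1: "c1 = 1 - ((s * w0)^2 + (s * w1) * (s * w2))"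
    and c2: "c2 = 1 - ((u * w0)^2 + (u * w1) * (u * w2))"
    by (simp_all add: c1_def c2_def cayley_den_def)
  show ?thesis
    unfolding mem_S_I_iff cayley_pair_def cayley_def Let_def c1_def[symmetric] c2_def[symmetric]
    by (simp add: field_simps \<open>c1 \<noteq> 0\<close> \<open>c2 \<noteq> 0\<close>)
       (intro conjI; use assms(1,2) c1 c2 in Groebner_Basis.algebra)
qed

lemma cayley_inverse:
  fixes x0 :: "'a::field_char_0"
  assumes det: "x0 * x3 - x1 * x2 = 1" and e: "e^2 = 1"
    and h: "h = 2 + e * (x0 + x3)" "h \<noteq> 0"
  shows "cayley_den (e * (x0 - x3) / h) (2 * e * x1 / h) (2 * e * x2 / h) \<noteq> 0"
    and "cayley e (e * (x0 - x3) / h) (2 * e * x1 / h) (2 * e * x2 / h) = [x0, x1, x2, x3]"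
proof -
  have D: "(e * (x0 - x3) / h)^2 + (2 * e * x1 / h) * (2 * e * x2 / h) = 1 - 4 / h"
  proof -
    have "e^2 * (x0 - x3)^2 + 4 * e^2 * x1 * x2 = h^2 - 4 * h"
      using det e h(1) by Groebner_Basis.algebra
    then show ?thesis
      using h(2) by (simp add: field_simps power2_eq_square) Groebner_Basis.algebra
  qed
  then have den: "cayley_den (e * (x0 - x3) / h) (2 * e * x1 / h) (2 * e * x2 / h) = 4 / h"
    by (simp add: cayley_den_def)
  then show "cayley_den (e * (x0 - x3) / h) (2 * e * x1 / h) (2 * e * x2 / h) \<noteq> 0"
    using h(2) by simp
  have "e * (1 + (1 - 4 / h) + 2 * (e * (x0 - x3) / h)) / (4 / h) = x0"
  proof -
    have "e * (2 * h - 4 + 2 * e * (x0 - x3)) = 4 * x0"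
      using e h(1) by Groebner_Basis.algebra
    then show ?thesis
      using h(2) by (simp add: field_simps) Groebner_Basis.algebra
  qed
  moreover have "e * (1 + (1 - 4 / h) - 2 * (e * (x0 - x3) / h)) / (4 / h) = x3"
  proof -
    have "e * (2 * h - 4 - 2 * e * (x0 - x3)) = 4 * x3"
      using e h(1) by Groebner_Basis.algebra
    then show ?thesis
      using h(2) by (simp add: field_simps) Groebner_Basis.algebra
  qed
  moreover have "e * (2 * (2 * e * x1 / h)) / (4 / h) = x1"
    "e * (2 * (2 * e * x2 / h)) / (4 / h) = x2"
    using h(2) e by (simp_all add: field_simps power2_eq_square)
  ultimately show
    "cayley e (e * (x0 - x3) / h) (2 * e * x1 / h) (2 * e * x2 / h) = [x0, x1, x2, x3]"
    unfolding cayley_def Let_def D den by simp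
qed

lemma proportional_if_cross_eq_0:
  fixes a0 :: "'a::field"
  assumes "a0 \<noteq> 0 \<or> a1 \<noteq> 0 \<or> a2 \<noteq> 0" "a1 * b2 = a2 * b1" "a0 * b1 = a1 * b0" "a0 * b2 = a2 * b0"
  shows "\<exists>\<beta>. b0 = \<beta> * a0 \<and> b1 = \<beta> * a1 \<and> b2 = \<beta> * a2"
  using assms(1)
proof (elim disjE)
  assume "a0 \<noteq> 0"
  then show ?thesis
    using assms by (intro exI[of _ "b0 / a0"]) (auto simp: field_simps)
next
  assume "a1 \<noteq> 0"
  then show ?thesis
    using assms by (intro exI[of _ "b1 / a1"]) (auto simp: field_simps)
next
  assume "a2 \<noteq> 0"
  then show ?thesis
    using assms by (intro exI[of _ "b2 / a2"]) (auto simp: field_simps)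
qed

lemma exists_sign_2_plus_neq_0:
  fixes T :: "'a::field_char_0"
  shows "\<exists>e. e^2 = 1 \<and> 2 + e * T \<noteq> 0"
proof (cases "2 + T = 0")
  case True
  then show ?thesis
    by (intro exI[of _ "- 1"]) (simp add: add_eq_0_iff)
qed (intro exI[of _ 1], simp)

lemma ex_cayley_pair_if_cross_eq_0:
  assumes "cayley_den a0 a1 a2 \<noteq> 0" "cayley_den b0 b1 b2 \<noteq> 0"
    and cross: "a1 * b2 = a2 * b1" "a0 * b1 = a1 * b0" "a0 * b2 = a2 * b0"
  shows "\<exists>w0 w1 w2 s u. cayley_den (s * w0) (s * w1) (s * w2) \<noteq> 0 \<and>
    cayley_den (u * w0) (u * w1) (u * w2) \<noteq> 0 \<and>
    cayley_pair e1 e2 w0 w1 w2 s u = cayley e1 a0 a1 a2 @ cayley e2 b0 b1 b2"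
proof (cases "a0 = 0 \<and> a1 = 0 \<and> a2 = 0")
  case True
  then have "cayley_pair e1 e2 b0 b1 b2 0 1 = cayley e1 a0 a1 a2 @ cayley e2 b0 b1 b2"
    by (simp add: cayley_pair_def)
  moreover have "cayley_den (0 * b0) (0 * b1) (0 * b2) \<noteq> 0"
    "cayley_den (1 * b0) (1 * b1) (1 * b2) \<noteq> 0"
    using assms(2) by (simp_all add: cayley_den_def)
  ultimately show ?thesis
    by blast
next
  case False
  then obtain \<beta> where \<beta>: "b0 = \<beta> * a0" "b1 = \<beta> * a1" "b2 = \<beta> * a2"
    using proportional_if_cross_eq_0[OF _ cross] by blast
  then have "cayley_pair e1 e2 a0 a1 a2 1 \<beta> = cayley e1 a0 a1 a2 @ cayley e2 b0 b1 b2"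
    by (simp add: cayley_pair_def)
  moreover have "cayley_den (1 * a0) (1 * a1) (1 * a2) \<noteq> 0"
    "cayley_den (\<beta> * a0) (\<beta> * a1) (\<beta> * a2) \<noteq> 0"
    using assms(1,2) \<beta> by simp_all
  ultimately show ?thesis
    by blast
qed

text \<open>The sign \<open>e\<close> avoids \<open>tr (e X) = -2\<close>, where the Cayley transform cannot be inverted.
  Commuting \<open>X\<close> and \<open>Y\<close> then have commuting, hence proportional, traceless Cayley parameters.\<close>

lemma S_I_subset_range_cayley_pair:
  fixes x :: "'k::field_char_0 alg_closure list"
  assumes "x \<in> S_I"
  shows "\<exists>e1 e2 w0 w1 w2 s u. e1^2 = 1 \<and> e2^2 = 1 \<and>
     cayley_den (s * w0) (s * w1) (s * w2) \<noteq> 0 \<and> cayley_den (u * w0) (u * w1) (u * w2) \<noteq> 0 \<and>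
     cayley_pair e1 e2 w0 w1 w2 s u = x"
proof -
  obtain x0 x1 x2 x3 x4 x5 x6 x7 where xs: "x = [x0, x1, x2, x3, x4, x5, x6, x7]"
    and SL: "x0 * x3 - x1 * x2 = 1" "x4 * x7 - x5 * x6 = 1"
    and comm: "x1 * x6 = x5 * x2" "x0 * x5 + x1 * x7 = x4 * x1 + x5 * x3"
      "x2 * x4 + x3 * x6 = x6 * x0 + x7 * x2"
    using assms by (rule S_I_elim)
  obtain e1 e2 where e: "e1^2 = 1" "2 + e1 * (x0 + x3) \<noteq> 0" "e2^2 = 1" "2 + e2 * (x4 + x7) \<noteq> 0"
    using exists_sign_2_plus_neq_0 by metis
  define h1 h2 where "h1 = 2 + e1 * (x0 + x3)" and "h2 = 2 + e2 * (x4 + x7)"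
  have "h1 \<noteq> 0" "h2 \<noteq> 0"
    using e by (simp_all add: h1_def h2_def)
  define a0 a1 a2 where
    "a0 = e1 * (x0 - x3) / h1" and "a1 = 2 * e1 * x1 / h1" and "a2 = 2 * e1 * x2 / h1"
  define b0 b1 b2 where
    "b0 = e2 * (x4 - x7) / h2" and "b1 = 2 * e2 * x5 / h2" and "b2 = 2 * e2 * x6 / h2"
  have A: "cayley_den a0 a1 a2 \<noteq> 0" "cayley e1 a0 a1 a2 = [x0, x1, x2, x3]"
    using cayley_inverse[OF SL(1) e(1) h1_def \<open>h1 \<noteq> 0\<close>] by (simp_all add: a0_def a1_def a2_def)
  have B: "cayley_den b0 b1 b2 \<noteq> 0" "cayley e2 b0 b1 b2 = [x4, x5, x6, x7]"
    using cayley_inverse[OF SL(2) e(3) h2_def \<open>h2 \<noteq> 0\<close>] by (simp_all add: b0_def b1_def b2_def)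
  have "x1 * x6 = x2 * x5"
    using comm(1) by (simp add: mult.commute)
  then have "a1 * b2 = a2 * b1"
    unfolding a1_def a2_def b1_def b2_def using \<open>h1 \<noteq> 0\<close> \<open>h2 \<noteq> 0\<close> by (simp add: field_simps)
  moreover have "(x0 - x3) * x5 = x1 * (x4 - x7)"
    using comm(2) by Groebner_Basis.algebra
  then have "a0 * b1 = a1 * b0"
    unfolding a0_def a1_def b0_def b1_def using \<open>h1 \<noteq> 0\<close> \<open>h2 \<noteq> 0\<close>
    by (simp add: field_simps) Groebner_Basis.algebra
  moreover have "(x0 - x3) * x6 = x2 * (x4 - x7)"
    using comm(3) by Groebner_Basis.algebra
  then have "a0 * b2 = a2 * b0"
    unfolding a0_def a2_def b0_def b2_def using \<open>h1 \<noteq> 0\<close> \<open>h2 \<noteq> 0\<close>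
    by (simp add: field_simps) Groebner_Basis.algebra
  ultimately obtain w0 w1 w2 s u where "cayley_den (s * w0) (s * w1) (s * w2) \<noteq> 0"
    "cayley_den (u * w0) (u * w1) (u * w2) \<noteq> 0" "cayley_pair e1 e2 w0 w1 w2 s u = x"
    using ex_cayley_pair_if_cross_eq_0[OF A(1) B(1), of e1 e2] unfolding A(2) B(2) xs by auto
  then show ?thesis
    using e(1,3) by blast
qed

lemma cayley_regular:
  assumes "rational_regular_at b A0" "rational_regular_at b A1" "rational_regular_at b A2"
    and "cayley_den (A0 b) (A1 b) (A2 b) \<noteq> 0" "i < 4"
  shows "rational_regular_at b (\<lambda>r. cayley e (A0 r) (A1 r) (A2 r) ! i)"
proof -
  have "i \<in> {0, 1, 2, 3}"
    using assms(5) by auto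
  then show ?thesis
    using assms(1-4) unfolding cayley_def cayley_den_def Let_def
    by (auto intro!: rational_regular_at_intros)
qed

lemma cayley_pair_regular:
  assumes "rational_regular_at b W0" "rational_regular_at b W1" "rational_regular_at b W2"
    "rational_regular_at b S" "rational_regular_at b U"
    and "cayley_den (S b * W0 b) (S b * W1 b) (S b * W2 b) \<noteq> 0"
    and "cayley_den (U b * W0 b) (U b * W1 b) (U b * W2 b) \<noteq> 0" "i < 8"
  shows "rational_regular_at b (\<lambda>r. cayley_pair e1 e2 (W0 r) (W1 r) (W2 r) (S r) (U r) ! i)"
proof -
  have len: "length (cayley e a0 a1 a2) = 4" for e a0 a1 a2 :: 'a
    by (simp add: cayley_def Let_def)
  show ?thesis
  proof (cases "i < 4")
    case True
    then show ?thesis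
      unfolding cayley_pair_def nth_append len using assms(1-6)
      by (simp add: cayley_regular rational_regular_at_mult)
  next
    case False
    then show ?thesis
      unfolding cayley_pair_def nth_append len using assms(1-5,7,8)
      by (simp add: cayley_regular rational_regular_at_mult)
  qed
qed

lemma comm_coords_regular:
  assumes "\<And>i. i < 8 \<Longrightarrow> rational_regular_at b (\<lambda>r. xs r ! i)" "xs b ! 1 * xs b ! 5 \<noteq> 0" "j < 4"
  shows "rational_regular_at b (\<lambda>r. comm_coords (xs r) ! j)"
proof -
  have "j \<in> {0, 1, 2, 3}"
    using assms(3) by auto
  then have
    "rational_regular_at b (\<lambda>r. coord_nums (xs r ! 0) (xs r ! 1) (xs r ! 2) (xs r ! 4) (xs r ! 5) ! j)"
    by (auto simp: coord_nums_def intro!: rational_regular_at_intros assms(1))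
  moreover have "rational_regular_at b (\<lambda>r. xs r ! 1 * xs r ! 5)"
    by (auto intro!: rational_regular_at_intros assms(1))
  moreover have "comm_coords (xs r) ! j =
      coord_nums (xs r ! 0) (xs r ! 1) (xs r ! 2) (xs r ! 4) (xs r ! 5) ! j / (xs r ! 1 * xs r ! 5)" for r
    using assms(3) by (simp add: comm_coords_def)
  ultimately show ?thesis
    using assms(2) by (simp add: rational_regular_at_divide)
qed

lemma generic_pair_cayley_pair_0_1_2:
  fixes e1 e2 :: "'a::field_char_0"
  assumes "e1^2 = 1" "e2^2 = 1"
  shows "generic_pair (cayley_pair e1 e2 0 1 2 1 1)"
proof -
  have "cayley_pair e1 e2 0 1 2 1 1 =
      [- 3 * e1, - 2 * e1, - 4 * e1, - 3 * e1, - 3 * e2, - 2 * e2, - 4 * e2, - 3 * e2]"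
    by (simp add: cayley_pair_def cayley_def cayley_den_def)
  moreover have "e1 = 1 \<or> e1 = - 1" "e2 = 1 \<or> e2 = - 1"
    using assms by (simp_all add: power2_eq_1_iff)
  ultimately show ?thesis
    by (auto simp: generic_pair_def comm_coords_def coord_nums_def param_den_def conic_den_def)
qed

lemma finite_nongeneric_on_cayley_curve:
  fixes e1 e2 :: "'k::field_char_0 alg_closure"
  assumes "e1^2 = 1" "e2^2 = 1"
    and regular: "rational_regular_at 1 W0" "rational_regular_at 1 W1" "rational_regular_at 1 W2"
      "rational_regular_at 1 S" "rational_regular_at 1 U"
    and at_1: "W0 1 = 0" "W1 1 = 1" "W2 1 = 2" "S 1 = 1" "U 1 = 1"
  defines "\<gamma> \<equiv> \<lambda>r. cayley_pair e1 e2 (W0 r) (W1 r) (W2 r) (S r) (U r)"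
  shows "finite {r. \<not> (\<gamma> r \<in> S_I \<and> generic_pair (\<gamma> r))}"
proof -
  define c1 where "c1 r = cayley_den (S r * W0 r) (S r * W1 r) (S r * W2 r)" for r
  define c2 where "c2 r = cayley_den (U r * W0 r) (U r * W1 r) (U r * W2 r)" for r
  define q where "q r = \<gamma> r ! 1 * \<gamma> r ! 5" for r
  define g where "g r = param_den (comm_coords (\<gamma> r) ! 0) (comm_coords (\<gamma> r) ! 1)
    (comm_coords (\<gamma> r) ! 2) (comm_coords (\<gamma> r) ! 3)" for r
  have c_1: "c1 1 = - 1" "c2 1 = - 1"
    by (simp_all add: c1_def c2_def cayley_den_def at_1)
  have "generic_pair (\<gamma> 1)"
    unfolding \<gamma>_def at_1 using assms(1,2) by (rule generic_pair_cayley_pair_0_1_2)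
  then have q_1: "q 1 \<noteq> 0" and g_1: "g 1 \<noteq> 0"
    by (simp_all add: generic_pair_def q_def g_def)
  have \<gamma>_regular: "rational_regular_at 1 (\<lambda>r. \<gamma> r ! i)" if "i < 8" for i
    unfolding \<gamma>_def by (intro cayley_pair_regular regular that) (simp_all add: at_1 cayley_den_def)
  have "rational_regular_at 1 c1" "rational_regular_at 1 c2"
    unfolding c1_def c2_def cayley_den_def using regular
    by (auto intro!: rational_regular_at_intros)
  moreover have "rational_regular_at 1 q"
    unfolding q_def by (intro rational_regular_at_intros \<gamma>_regular) simp_all
  moreover have "rational_regular_at 1 g"
    unfolding g_def param_den_def conic_den_def
    by (intro rational_regular_at_intros comm_coords_regular[OF \<gamma>_regular])
       (use q_1 in \<open>simp_all add: q_def\<close>)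
  ultimately have "finite ({r. c1 r = 0} \<union> {r. c2 r = 0} \<union> {r. q r = 0} \<union> {r. g r = 0})"
    using c_1 q_1 g_1 by (simp add: finite_zeros_if_rational_regular_at)
  moreover have "\<gamma> r \<in> S_I" if "c1 r \<noteq> 0" "c2 r \<noteq> 0" for r
    unfolding \<gamma>_def using assms(1,2) that unfolding c1_def c2_def by (rule cayley_pair_mem_S_I)
  then have "{r. \<not> (\<gamma> r \<in> S_I \<and> q r \<noteq> 0 \<and> g r \<noteq> 0)} \<subseteq>
      {r. c1 r = 0} \<union> {r. c2 r = 0} \<union> {r. q r = 0} \<union> {r. g r = 0}"
    by auto
  ultimately show ?thesis
    unfolding generic_pair_def q_def g_def by (rule finite_subset[rotated])
qed

lemma zariski_dense_generic_S_I:
  "zariski_dense_in 8 {x \<in> (S_I :: 'k::field_char_0 alg_closure list set). generic_pair x} S_I"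
proof (rule zariski_dense_in_if_curves)
  show "infinite (UNIV :: 'k alg_closure set)"
    by (rule infinite_UNIV_char_0)
next
  fix x :: "'k alg_closure list"
  assume "x \<in> S_I"
  then obtain e1 e2 w0 w1 w2 s u where e: "e1^2 = 1" "e2^2 = 1"
    and c: "cayley_den (s * w0) (s * w1) (s * w2) \<noteq> 0" "cayley_den (u * w0) (u * w1) (u * w2) \<noteq> 0"
    and x: "cayley_pair e1 e2 w0 w1 w2 s u = x"
    using S_I_subset_range_cayley_pair by blast
  define lerp :: "'k alg_closure \<Rightarrow> 'k alg_closure \<Rightarrow> 'k alg_closure \<Rightarrow> 'k alg_closure"
    where "lerp a c r = a + r * (c - a)" for a c r
  have lerp: "rational_regular_at b (lerp a c)" "lerp a c 0 = a" "lerp a c 1 = c" for a c b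
    unfolding lerp_def by (auto intro!: rational_regular_at_intros)
  let ?\<gamma> =
    "\<lambda>r. cayley_pair e1 e2 (lerp w0 0 r) (lerp w1 1 r) (lerp w2 2 r) (lerp s 1 r) (lerp u 1 r)"
  have "\<forall>i<8. rational_regular_at 0 (\<lambda>r. ?\<gamma> r ! i)"
    using c by (auto intro!: cayley_pair_regular lerp(1) simp: lerp(2))
  moreover have "finite {r. ?\<gamma> r \<notin> {x \<in> S_I. generic_pair x}}"
    using finite_nongeneric_on_cayley_curve[OF e lerp(1,1,1,1,1) lerp(3,3,3,3,3)] by simp
  ultimately show "\<exists>\<gamma>. \<gamma> 0 = x \<and> (\<forall>i<8. rational_regular_at 0 (\<lambda>r. \<gamma> r ! i)) \<and>
      finite {r. \<gamma> r \<notin> {x \<in> S_I. generic_pair x}}"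
    using x by (intro exI[of _ ?\<gamma>]) (simp add: lerp(2))
qed blast

theorem proposition3p8:
  shows "k_rational_of_dim 4 8 (S_I :: 'k::field_char_0 alg_closure list set)"
proof (rule k_rational_of_dimI[where f = "\<lambda>i. param_nums (Var 0) (Var 1) (Var 2) (Var 3) ! i"
      and g = "param_den (Var 0) (Var 1) (Var 2) (Var 3)"
      and G = "\<lambda>t. param_den (t!0) (t!1) (t!2) (t!3)"
      and p = "\<lambda>j. coord_nums (Var 0) (Var 1) (Var 2) (Var 4) (Var 5) ! j"
      and q = "Var 1 * Var 5" and Q = "\<lambda>x. x!1 * x!5"
      and \<phi> = comm_param and \<psi> = comm_coords and t' = "[1, 1, - 1, 0]"])
  show "S_I \<subseteq> {x. length x = 8}"
    by (auto simp: mem_S_I_iff)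
  show "param_den ([1, 1, - 1, 0] ! 0) ([1, 1, - 1, 0] ! 1) ([1, 1, - 1, 0] ! 2) ([1, 1, - 1, 0] ! 3)
      \<noteq> 0"
    "comm_param [1, 1, - 1, 0] ! 1 * comm_param [1, 1, - 1, 0] ! 5 \<noteq> (0 :: 'k alg_closure)"
    by (simp_all add: comm_param_def param_nums_def param_den_def conic_den_def conic_num_def
        Let_def)
  (* One_nat_def must stay out of the simp set: it would rewrite Var 1 to Var (Suc 0), and the
     lemmas about the polynomials above would no longer match. *)
qed (use zariski_dense_generic_S_I in \<open>auto simp del: One_nat_def simp: generic_pair_def
    map_meval_param_nums map_meval_coord_nums poly_in_param_nums poly_in_param_den poly_in_coord_nums
    comm_param_mem_S_I comm_param_comm_coords comm_coords_comm_param intro!: poly_in_intros\<close>)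

end
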